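(* Let $\Delta$ be a region of $\mathcal{C}_{n,A}$ ($n\ge1$) and let $D_1(\Delta)$ be the Dyck path defined below. Then $\mathrm{level}(\Delta)=\ell(D_1(\Delta))$. Equivalently, for any $\bm x\in\Delta$ with $x_{\pi(1)}>\dots>x_{\pi(n)}$, $\mathrm{level}(\Delta)=1+\#\{k\in[n-1]: x_{\pi(k)}-x_{\pi(k+1)}>a_1\}$.
   Context: Let $A=\{a_1,\dots,a_m\}$ with $a_1>\dots>a_m>0$; $\mathcal{C}_{n,A}$ is the arrangement in $\mathbb{R}^n$ of hyperplanes $x_i-x_j=0$ ($i<j$) and $x_i-x_j=a_k$ ($i\ne j$, $1\le k\le m$); regions are connected components of the complement. The level of $X\subseteq\mathbb{R}^n$ is the smallest integer $\ell\ge0$ such that there are a linear subspace $W$ of dimension $\ell$ and $r>0$ with $X\subseteq\{\bm x:\min_{\bm y\in W}\|\bm x-\bm y\|\le r\}$. For a region $\Delta$, pick $\bm x\in\Delta$ and $\pi\in\mathfrak{S}_n$ with $x_{\pi(1)}>\dots>x_{\pi(n)}$, and let $\alpha_i=\#\{j\in[n]:x_{\pi(i)}-x_{\pi(j)}>a_1\}$ (number of $+$ entries in row $i$ of the sign matrix $(\operatorname{sgn}(x_{\pi(i)}-x_{\pi(j)}-a_1))_{i,j}$); then $\alpha_1\ge\dots\ge\alpha_n=0$ and $\alpha_i\le n-i$, and these numbers do not depend on the choice of $\bm x\in\Delta$. $D_1(\Delta)$ is the lattice path from $(0,n)$ to $(n,0)$ with steps $E=(1,0)$, $S=(0,-1)$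 given by $E^{n-\alpha_1}SE^{\alpha_1-\alpha_2}S\cdots E^{\alpha_{n-1}-\alpha_n}S$; it is a Dyck path (stays weakly above the line $y=n-x$). For a Dyck path $D$ from $(0,n)$ to $(n,0)$, $\ell(D)$ is its number of prime components, i.e. the number of $k\in\{1,\dots,n\}$ such that $D$ passes through the point $(k,n-k)$. *)

theory Defs
  imports "HOL-Analysis.Analysis"
begin

text \<open>Points of R^n are vectors of type real^'n with n = CARD('n).
  The hyperplanes x_i - x_j = 0 (i<j) are the same as x_i - x_j = 0 for i \<noteq> j,
  so no ordering of the index type is needed.\<close>

definition arr_hyperplanes :: "real set \<Rightarrow> (real^'n) set set" where
  "arr_hyperplanes A =
     {{x. x$i - x$j = 0} | i j. i \<noteq> j} \<union>
     {{x. x$i - x$j = a} | i j a. i \<noteq> j \<and> a \<in> A}"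

definition arr_complement :: "real set \<Rightarrow> (real^'n) set" where
  "arr_complement A = UNIV - \<Union>(arr_hyperplanes A)"

definition arr_regions :: "real set \<Rightarrow> (real^'n) set set" where
  "arr_regions A = components (arr_complement A)"

definition level :: "(real^'n) set \<Rightarrow> nat" where
  "level X = (LEAST l. \<exists>W r. subspace W \<and> dim W = l \<and> r > 0 \<and>
                            (\<forall>x\<in>X. infdist x W \<le> r))"

text \<open>The lattice path E^{n-\<alpha>_1} S E^{\<alpha>_1-\<alpha>_2} S ... E^{\<alpha>_{n-1}-\<alpha>_n} S,
  as a list of steps (True = E = (1,0), False = S = (0,-1)), with \<alpha>_0 := n.\<close>
definition path_steps :: "nat \<Rightarrow> (nat \<Rightarrow> nat) \<Rightarrow> bool list" where
  "path_steps n \<alpha> =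
     concat (map (\<lambda>i. replicate ((if i = 1 then n else \<alpha> (i - 1)) - \<alpha> i) True @ [False])
                 [1..<n+1])"

definition step_vec :: "bool \<Rightarrow> int \<times> int" where
  "step_vec s = (if s then (1, 0) else (0, -1))"

fun path_points :: "int \<times> int \<Rightarrow> bool list \<Rightarrow> (int \<times> int) list" where
  "path_points p [] = [p]"
| "path_points p (s # ss) = p # path_points (fst p + fst (step_vec s), snd p + snd (step_vec s)) ss"

definition D1_path :: "nat \<Rightarrow> (nat \<Rightarrow> nat) \<Rightarrow> (int \<times> int) list" where
  "D1_path n \<alpha> = path_points (0, int n) (path_steps n \<alpha>)"

definition prime_components :: "nat \<Rightarrow> (int \<times> int) list \<Rightarrow> nat" where
  "prime_components n D = card {k \<in> {1..n}. (int k, int n - int k) \<in> set D}"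

definition alpha_seq :: "real \<Rightarrow> nat \<Rightarrow> (nat \<Rightarrow> 'n) \<Rightarrow> real^'n \<Rightarrow> nat \<Rightarrow> nat" where
  "alpha_seq a1 n \<pi> x i = card {j \<in> {1..n}. x$(\<pi> i) - x$(\<pi> j) > a1}"

end

theory Submission
  imports Defs
begin

text \<open>
  Let \<open>K\<close> consist of \<open>n\<close> and of the positions \<open>k < n\<close> at which the coordinates of \<open>x\<close>, sorted
  decreasingly, drop by more than \<open>a\<^sub>1 = max A\<close>. For \<open>k \<in> K\<close>, raising the \<open>k\<close> largest coordinates
  by any \<open>t \<ge> 0\<close> crosses no hyperplane, so \<open>\<Delta>\<close> contains the rays from \<open>x\<close> in these \<open>|K|\<close> independent
  directions and any subspace near which \<open>\<Delta>\<close> stays must contain them. Conversely, on the connected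
  region \<open>\<Delta>\<close> every other consecutive gap keeps its sign relative to \<open>0\<close> and \<open>a\<^sub>1\<close>, hence lies in
  \<open>(0, a\<^sub>1)\<close>, so \<open>\<Delta>\<close> stays within bounded distance of the span of those directions. Thus the level
  is \<open>|K|\<close>. On the path side, \<open>D\<^sub>1(\<Delta>)\<close> touches the diagonal at \<open>(k, n - k)\<close> exactly when \<open>\<alpha>\<^sub>k = n - k\<close>,
  i.e. when every later coordinate is more than \<open>a\<^sub>1\<close> below \<open>x\<^sub>\<pi>\<^sub>(\<^sub>k\<^sub>)\<close>, i.e. when \<open>k \<in> K\<close>.
\<close>

section \<open>Lattice paths\<close>

lemma set_path_points_replicate_True:
  "set (path_points (a, b) (replicate m True @ ys)) =
     {(a + int t, b) | t. t < m} \<union> set (path_points (a + int m, b) ys)"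
proof (induction m arbitrary: a)
  case (Suc m)
  have "{(a + int t, b) | t. t < Suc m} = insert (a, b) {(a + 1 + int t, b) | t. t < m}"
    by (auto simp: less_Suc_eq_0_disj) (metis of_nat_Suc)
  with Suc[of "a + 1"] show ?case
    by (simp add: step_vec_def add.assoc)
qed simp

lemma set_path_points_blocks:
  "set (path_points (a, b) (concat (map (\<lambda>m. replicate m True @ [False]) ms))) =
     (\<Union>i<length ms. {(a + int (sum_list (take i ms)) + int t, b - int i) | t. t \<le> ms ! i})
     \<union> {(a + int (sum_list ms), b - int (length ms))}"
proof (induction ms arbitrary: a b)
  case (Cons m ms)
  have row: "{(a + int t, b) | t. t < m} \<union> {(a + int m, b)} = {(a + int t, b) | t. t \<le> m}"
    by (auto simp: le_less)
  show ?case
    using Cons[of "a + int m" "b - 1"]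
    by (simp add: set_path_points_replicate_True step_vec_def lessThan_Suc_eq_insert_0
        image_Union flip: row) (auto simp: algebra_simps)
qed simp

lemma sum_list_take_differences:
  fixes \<beta> :: "nat \<Rightarrow> nat"
  assumes antitone: "\<And>i. i < n \<Longrightarrow> \<beta> (Suc i) \<le> \<beta> i" and "i \<le> n"
  shows "sum_list (take i (map (\<lambda>i. \<beta> i - \<beta> (Suc i)) [0..<n])) = \<beta> 0 - \<beta> i"
  using assms(2)
proof (induction i)
  case (Suc i)
  have "\<beta> i \<le> \<beta> 0" if "i \<le> n" for i
    using that
  proof (induction i)
    case (Suc i)
    then show ?case using antitone[of i] by simp
  qed simp
  then show ?case
    using Suc antitone[of i] by (simp add: take_Suc_conv_app_nth)
qed simp

lemma path_steps_blocks:
  "path_steps n \<alpha> = concat (map (\<lambda>m. replicate m True @ [False])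
     (map (\<lambda>i. (if i = 0 then n else \<alpha> i) - \<alpha> (Suc i)) [0..<n]))"
  unfolding path_steps_def by (simp add: map_Suc_upt[symmetric] comp_def del: upt_Suc cong: if_cong)

context
  fixes n :: nat and \<alpha> :: "nat \<Rightarrow> nat"
  assumes antitone: "\<And>i. 1 \<le> i \<Longrightarrow> i < n \<Longrightarrow> \<alpha> (Suc i) \<le> \<alpha> i"
    and bound: "\<And>i. 1 \<le> i \<Longrightarrow> i \<le> n \<Longrightarrow> \<alpha> i \<le> n - i"
begin

lemma set_D1_path: "set (D1_path n \<alpha>) =
    (\<Union>i<n. {(int (n - (\<alpha>(0 := n)) i) + int t, int n - int i) | t. t \<le> (\<alpha>(0 := n)) i - \<alpha> (Suc i)})
    \<union> {(int (n - \<alpha> n), 0)}"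
proof -
  define \<beta> where "\<beta> = \<alpha>(0 := n)"
  have \<beta>_anti: "\<beta> (Suc i) \<le> \<beta> i" if "i < n" for i
    using antitone[of i] bound[of 1] that by (cases "i = 0") (auto simp: \<beta>_def)
  define ms where "ms = map (\<lambda>i. \<beta> i - \<beta> (Suc i)) [0..<n]"
  have take_ms: "sum_list (take i ms) = n - \<beta> i" if "i \<le> n" for i
    using sum_list_take_differences[of n \<beta>, OF \<beta>_anti that] by (simp add: ms_def \<beta>_def)
  have sum_ms: "sum_list ms = n - \<beta> n"
    using take_ms[of n] by (simp add: ms_def)
  have "D1_path n \<alpha> = path_points (0, int n) (concat (map (\<lambda>m. replicate m True @ [False]) ms))"
    unfolding D1_path_def path_steps_blocks ms_def \<beta>_def by simp
  then have "set (D1_path n \<alpha>) =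
      (\<Union>i<n. {(int (n - \<beta> i) + int t, int n - int i) | t. t \<le> \<beta> i - \<beta> (Suc i)})
      \<union> {(int (n - \<beta> n), 0)}"
    using take_ms sum_ms by (simp add: set_path_points_blocks) (simp add: ms_def)
  then show ?thesis
    by (cases n) (simp_all add: \<beta>_def)
qed

lemma mem_D1_path_diagonal_iff:
  assumes k: "k \<in> {1..n}"
  shows "(int k, int n - int k) \<in> set (D1_path n \<alpha>) \<longleftrightarrow> \<alpha> k = n - k"
proof
  assume "(int k, int n - int k) \<in> set (D1_path n \<alpha>)"
  then consider "int k = int (n - \<alpha> n)" "int n - int k = 0"
    | t where "k < n" "int k = int (n - \<alpha> k) + int t"
    using k by (auto simp: set_D1_path)
  moreover have "\<alpha> k \<le> n - k"
    using bound k by simp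
  ultimately show "\<alpha> k = n - k"
    by cases linarith+
next
  assume "\<alpha> k = n - k"
  show "(int k, int n - int k) \<in> set (D1_path n \<alpha>)"
  proof (cases "k = n")
    case True
    with \<open>\<alpha> k = n - k\<close> show ?thesis
      by (simp add: set_D1_path)
  next
    case False
    with k have "k < n" "(\<alpha>(0 := n)) k = n - k"
      using \<open>\<alpha> k = n - k\<close> by auto
    then have "(int k, int n - int k) \<in>
        {(int (n - (\<alpha>(0 := n)) k) + int t, int n - int k) | t. t \<le> (\<alpha>(0 := n)) k - \<alpha> (Suc k)}"
      by (intro CollectI exI[of _ 0]) simp
    with \<open>k < n\<close> show ?thesis
      by (subst set_D1_path) (intro UnI1 UN_I[of k]; simp_all)
  qed
qed

lemma prime_components_D1_path: "prime_components n (D1_path n \<alpha>) = card {k \<in> {1..n}. \<alpha> k = n - k}"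
  unfolding prime_components_def
  using mem_D1_path_diagonal_iff by (metis (lifting))

end

section \<open>The sequence \<alpha> of a decreasing point\<close>

lemma decreasing_imp_le:
  fixes \<pi> :: "nat \<Rightarrow> 'n::finite" and x :: "real^'n"
  assumes "\<forall>i\<in>{1..n}. \<forall>j\<in>{1..n}. i < j \<longrightarrow> x$\<pi> i > x$\<pi> j"
    and "i \<in> {1..n}" and "j \<in> {1..n}" and "i \<le> j"
  shows "x$\<pi> j \<le> x$\<pi> i"
proof (cases "i = j")
  case False
  with assms show ?thesis
    by fastforce
qed simp

context
  fixes n :: nat and \<pi> :: "nat \<Rightarrow> 'n::finite" and x :: "real^'n" and c :: real
  assumes decreasing: "\<forall>i\<in>{1..n}. \<forall>j\<in>{1..n}. i < j \<longrightarrow> x$\<pi> i > x$\<pi> j"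
    and "0 \<le> c"
begin

lemma alpha_seq_set_subset:
  assumes "i \<in> {1..n}"
  shows "{j \<in> {1..n}. c < x$\<pi> i - x$\<pi> j} \<subseteq> {Suc i..n}"
proof
  fix j
  assume j: "j \<in> {j \<in> {1..n}. c < x$\<pi> i - x$\<pi> j}"
  show "j \<in> {Suc i..n}"
  proof (rule ccontr)
    assume "j \<notin> {Suc i..n}"
    with j have "x$\<pi> i \<le> x$\<pi> j"
      using decreasing_imp_le[OF decreasing _ assms] by auto
    with j \<open>0 \<le> c\<close> show False
      by auto
  qed
qed

lemma alpha_seq_le: "i \<in> {1..n} \<Longrightarrow> alpha_seq c n \<pi> x i \<le> n - i"
  unfolding alpha_seq_def using card_mono[OF _ alpha_seq_set_subset] by fastforce

lemma alpha_seq_antitone: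
  assumes "1 \<le> i" and "i < n"
  shows "alpha_seq c n \<pi> x (Suc i) \<le> alpha_seq c n \<pi> x i"
proof -
  have "x$\<pi> (Suc i) < x$\<pi> i"
    using decreasing assms by auto
  then have "{j \<in> {1..n}. c < x$\<pi> (Suc i) - x$\<pi> j} \<subseteq> {j \<in> {1..n}. c < x$\<pi> i - x$\<pi> j}"
    by auto
  then show ?thesis
    unfolding alpha_seq_def by (rule card_mono[rotated]) simp
qed

lemma alpha_seq_eq_iff:
  assumes i: "i \<in> {1..n}"
  shows "alpha_seq c n \<pi> x i = n - i \<longleftrightarrow> i = n \<or> c < x$\<pi> i - x$\<pi> (Suc i)"
proof -
  let ?J = "{j \<in> {1..n}. c < x$\<pi> i - x$\<pi> j}"
  have "alpha_seq c n \<pi> x i = n - i \<longleftrightarrow> card ?J = card {Suc i..n}"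
    unfolding alpha_seq_def by simp
  also have "\<dots> \<longleftrightarrow> ?J = {Suc i..n}"
    using card_subset_eq[OF _ alpha_seq_set_subset[OF i]] by auto
  also have "\<dots> \<longleftrightarrow> i = n \<or> Suc i \<in> ?J"
  proof (cases "i = n")
    case False
    have "c < x$\<pi> i - x$\<pi> j" if "c < x$\<pi> i - x$\<pi> (Suc i)" "j \<in> {Suc i..n}" for j
    proof -
      have "x$\<pi> j \<le> x$\<pi> (Suc i)"
        using decreasing_imp_le[OF decreasing, of "Suc i" j] i that(2) by simp
      with that(1) show ?thesis
        by linarith
    qed
    with False i alpha_seq_set_subset[OF i] show ?thesis
      by auto
  qed (use alpha_seq_set_subset[OF i] in auto)
  finally show ?thesis
    using i by auto
qed

lemma prime_components_D1_path_alpha_seq: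
  assumes "1 \<le> n"
  shows "prime_components n (D1_path n (alpha_seq c n \<pi> x)) =
    Suc (card {k \<in> {1..n - 1}. c < x$\<pi> k - x$\<pi> (k + 1)})"
proof -
  let ?G = "{k \<in> {1..n - 1}. c < x$\<pi> k - x$\<pi> (k + 1)}"
  have "alpha_seq c n \<pi> x n = 0"
    using alpha_seq_le[of n] assms by simp
  then have "{k \<in> {1..n}. alpha_seq c n \<pi> x k = n - k} = insert n ?G"
    using assms by (auto simp: alpha_seq_eq_iff)
  moreover have "finite ?G" "n \<notin> ?G"
    using assms by auto
  ultimately show ?thesis
    by (simp add: prime_components_D1_path alpha_seq_antitone alpha_seq_le)
qed

end

section \<open>Level via rays and bounded distance\<close>

lemma arr_complement_iff:
  "z \<in> arr_complement A \<longleftrightarrow> (\<forall>i j. i \<noteq> j \<longrightarrow> z$i \<noteq> z$j \<and> z$i - z$j \<notin> A)"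
proof
  assume z: "z \<in> arr_complement A"
  show "\<forall>i j. i \<noteq> j \<longrightarrow> z$i \<noteq> z$j \<and> z$i - z$j \<notin> A"
  proof (intro allI impI)
    fix i j :: 'a
    assume "i \<noteq> j"
    then have "{y. y$i - y$j = c} \<in> arr_hyperplanes A" if "c = 0 \<or> c \<in> A" for c
      using that unfolding arr_hyperplanes_def by blast
    then show "z$i \<noteq> z$j \<and> z$i - z$j \<notin> A"
      using z unfolding arr_complement_def by fastforce
  qed
qed (auto simp: arr_complement_def arr_hyperplanes_def)

lemma mem_arr_complement_if_decreasing:
  fixes \<pi> :: "nat \<Rightarrow> 'n::finite" and z :: "real^'n"
  assumes "bij_betw \<pi> {1..n} UNIV" and "\<forall>a\<in>A. 0 < a"
    and "\<And>i j. i \<in> {1..n} \<Longrightarrow> j \<in> {1..n} \<Longrightarrow> i < j \<Longrightarrow> z$\<pi> j < z$\<pi> i \<and> z$\<pi> i - z$\<pi> j \<notin> A"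
  shows "z \<in> arr_complement A"
  unfolding arr_complement_iff
proof (intro allI impI)
  fix p q :: 'n
  assume "p \<noteq> q"
  have "\<pi> ` {1..n} = UNIV"
    using assms(1) by (rule bij_betw_imp_surj_on)
  then obtain i j where ij: "i \<in> {1..n}" "j \<in> {1..n}" "p = \<pi> i" "q = \<pi> j"
    by (metis UNIV_I imageE)
  with \<open>p \<noteq> q\<close> have "i \<noteq> j"
    by blast
  then consider "i < j" | "j < i"
    by linarith
  then show "z$p \<noteq> z$q \<and> z$p - z$q \<notin> A"
  proof cases
    case 1
    then show ?thesis
      using assms(3)[of i j] ij by auto
  next
    case 2
    then have "z$p - z$q < 0"
      using assms(3)[of j i] ij by auto
    then show ?thesis
      using assms(2) by fastforce
  qed
qed

lemma connected_diff_less_iff: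
  fixes S :: "(real^'n) set"
  assumes "connected S" and "x \<in> S" and "y \<in> S" and avoid: "\<And>z. z \<in> S \<Longrightarrow> z$i - z$j \<noteq> c"
  shows "x$i - x$j < c \<longleftrightarrow> y$i - y$j < c"
proof -
  have "u$i - u$j < c" if u: "u \<in> S" and v: "v \<in> S" "v$i - v$j < c" for u v
  proof (rule ccontr)
    assume "\<not> u$i - u$j < c"
    then have "(axis i 1 - axis j 1) \<bullet> v \<le> c" "c \<le> (axis i 1 - axis j 1) \<bullet> u"
      using v(2) by (auto simp: inner_diff_left inner_axis')
    then obtain z where "z \<in> S" "(axis i 1 - axis j 1) \<bullet> z = c"
      using connected_ivt_hyperplane[OF assms(1) v(1) u] by blast
    with avoid show False by (auto simp: inner_diff_left inner_axis')
  qed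
  with assms(2,3) show ?thesis by blast
qed

lemma component_contains_ray:
  fixes x v :: "'a::real_normed_vector"
  assumes "C \<in> components S" and "x \<in> C" and ray: "\<And>t. 0 \<le> t \<Longrightarrow> x + t *\<^sub>R v \<in> S"
    and "0 \<le> s"
  shows "x + s *\<^sub>R v \<in> C"
proof -
  let ?R = "(\<lambda>t. x + t *\<^sub>R v) ` {0..}"
  have "connected ?R"
    by (intro connected_continuous_image continuous_intros) (simp add: is_interval_connected_1)
  moreover have "x \<in> ?R"
    by (rule image_eqI[of _ _ 0]) simp_all
  moreover have "?R \<subseteq> S"
    using ray by auto
  moreover have "C = connected_component_set S x"
    using assms(1,2) by (metis components_iff connected_component_eq)
  ultimately have "?R \<subseteq> C"
    by (simp add: connected_component_maximal)
  then show ?thesis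
    using \<open>0 \<le> s\<close> by auto
qed

lemma mem_subspace_if_ray_infdist_bounded:
  fixes W :: "'a::euclidean_space set"
  assumes W: "subspace W" and near: "\<And>t. 0 \<le> t \<Longrightarrow> infdist (x + t *\<^sub>R v) W \<le> r"
  shows "v \<in> W"
proof (rule ccontr)
  assume "v \<notin> W"
  have "closed W" "W \<noteq> {}"
    using W by (auto intro: closed_subspace subspace_0)
  define d where "d = infdist v W"
  have "0 < d"
    unfolding d_def using \<open>closed W\<close> \<open>W \<noteq> {}\<close> \<open>v \<notin> W\<close> by (rule infdist_pos_not_in_closed)
  have "0 \<le> r"
    using near[of 0] infdist_nonneg[of x W] by simp
  define t where "t = (r + norm x + 1) / d"
  have "0 < t"
    unfolding t_def using \<open>0 < d\<close> \<open>0 \<le> r\<close> by (simp add: add_nonneg_pos)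
  have "t * d \<le> infdist (t *\<^sub>R v) W"
  proof -
    obtain w where w: "w \<in> W" "infdist (t *\<^sub>R v) W = dist (t *\<^sub>R v) w"
      using infdist_attains_inf[OF \<open>closed W\<close> \<open>W \<noteq> {}\<close>] by blast
    have "d \<le> dist v ((1/t) *\<^sub>R w)"
      unfolding d_def using W w(1) by (simp add: infdist_le subspace_scale)
    also have "\<dots> = dist (t *\<^sub>R v) w / t"
    proof -
      have "t *\<^sub>R v - w = t *\<^sub>R (v - (1/t) *\<^sub>R w)"
        using \<open>0 < t\<close> by (simp add: algebra_simps)
      then show ?thesis
        using \<open>0 < t\<close> by (simp add: dist_norm)
    qed
    finally show ?thesis
      using \<open>0 < t\<close> w(2) by (simp add: field_simps)
  qed
  also have "\<dots> \<le> infdist (x + t *\<^sub>R v) W + dist (t *\<^sub>R v) (x + t *\<^sub>R v)"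
    by (rule infdist_triangle)
  also have "\<dots> \<le> r + norm x"
    using near[of t] \<open>0 < t\<close> by (simp add: dist_norm)
  finally show False
    using \<open>0 < d\<close> unfolding t_def by simp
qed

lemma level_eq_card_independent:
  fixes X :: "(real^'n) set"
  assumes "independent V"
    and rays: "\<And>v s. v \<in> V \<Longrightarrow> 0 \<le> s \<Longrightarrow> x + s *\<^sub>R v \<in> X"
    and near: "\<And>y. y \<in> X \<Longrightarrow> infdist y (span V) \<le> r"
  shows "level X = card V"
  unfolding level_def
proof (rule Least_equality)
  have "subspace (span V)" "dim (span V) = card V" "0 < max r 1"
    "\<forall>y\<in>X. infdist y (span V) \<le> max r 1"
    using \<open>independent V\<close> near by (auto simp: dim_eq_card_independent intro: max.coboundedI1)
  then show "\<exists>W r. subspace W \<and> dim W = card V \<and> 0 < r \<and> (\<forall>y\<in>X. infdist y W \<le> r)"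
    by blast
next
  fix l
  assume "\<exists>W r. subspace W \<and> dim W = l \<and> 0 < r \<and> (\<forall>y\<in>X. infdist y W \<le> r)"
  then obtain W r' where W: "subspace W" "dim W = l" "\<forall>y\<in>X. infdist y W \<le> r'"
    by blast
  have "V \<subseteq> W"
  proof
    fix v
    assume "v \<in> V"
    show "v \<in> W"
      by (rule mem_subspace_if_ray_infdist_bounded[OF W(1)]) (use W(3) rays[OF \<open>v \<in> V\<close>] in blast)
  qed
  then show "card V \<le> l"
    using independent_card_le_dim[OF _ \<open>independent V\<close>] W(2) by metis
qed

definition top_block :: "(nat \<Rightarrow> 'n::finite) \<Rightarrow> nat \<Rightarrow> real^'n" where
  "top_block \<pi> k = (\<chi> j. if j \<in> \<pi> ` {1..k} then 1 else 0)"

definition top_block_coeff :: "nat \<Rightarrow> (nat \<Rightarrow> 'n::finite) \<Rightarrow> real^'n \<Rightarrow> nat \<Rightarrow> real" where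
  "top_block_coeff n \<pi> y k = y$\<pi> k - (if k < n then y$\<pi> (Suc k) else 0)"

lemma top_block_nth:
  assumes "inj_on \<pi> {1..n}" and "i \<in> {1..n}" and "k \<le> n"
  shows "top_block \<pi> k $ \<pi> i = (if i \<le> k then 1 else 0)"
proof -
  have "\<pi> i \<in> \<pi> ` {1..k} \<longleftrightarrow> i \<in> {1..k}"
    using assms by (intro inj_on_image_mem_iff) auto
  then show ?thesis
    using assms(2) by (simp add: top_block_def)
qed

lemma norm_top_block_le:
  fixes \<pi> :: "nat \<Rightarrow> 'n::finite"
  shows "norm (top_block \<pi> k) \<le> CARD('n)"
proof -
  have "norm (top_block \<pi> k) \<le> (\<Sum>j\<in>UNIV. \<bar>top_block \<pi> k $ j\<bar>)"
    by (rule norm_le_l1_cart)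
  also have "\<dots> \<le> (\<Sum>j\<in>(UNIV::'n set). 1)"
    by (rule sum_mono) (simp add: top_block_def)
  finally show ?thesis
    by simp
qed

lemma card_eq_if_bij_betw_interval:
  fixes \<pi> :: "nat \<Rightarrow> 'n::finite"
  assumes "bij_betw \<pi> {1..n} UNIV"
  shows "n = CARD('n)"
  using bij_betw_same_card[OF assms] by simp

lemma top_block_expansion:
  fixes \<pi> :: "nat \<Rightarrow> 'n::finite"
  assumes bij: "bij_betw \<pi> {1..n} UNIV"
  shows "y = (\<Sum>k=1..n. top_block_coeff n \<pi> y k *\<^sub>R top_block \<pi> k)"
proof -
  let ?c = "top_block_coeff n \<pi> y"
  have coord: "y$\<pi> i = (\<Sum>k=1..n. ?c k * top_block \<pi> k $ \<pi> i)" if i: "i \<in> {1..n}" for i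
  proof -
    have "(\<Sum>k=1..n. ?c k * top_block \<pi> k $ \<pi> i) = (\<Sum>k=1..n. if i \<le> k then ?c k else 0)"
      using bij_betw_imp_inj_on[OF bij] i by (intro sum.cong) (auto simp: top_block_nth)
    also have "\<dots> = sum ?c {i..n}"
      using i by (simp add: sum.If_cases Int_def) (intro sum.cong; auto)
    also have "{i..n} = insert n {i..<n}"
      using i by auto
    also have "sum ?c (insert n {i..<n}) = y$\<pi> n + (\<Sum>k=i..<n. y$\<pi> k - y$\<pi> (Suc k))"
      by (simp add: top_block_coeff_def)
    also have "(\<Sum>k=i..<n. y$\<pi> k - y$\<pi> (Suc k)) = (\<Sum>k=i..<n. (- y$\<pi> (Suc k)) - (- y$\<pi> k))"
      by simp
    also have "\<dots> = y$\<pi> i - y$\<pi> n"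
      using i by (subst sum_Suc_diff') auto
    finally show ?thesis
      by simp
  qed
  show ?thesis
    unfolding vec_eq_iff
  proof
    fix j
    obtain i where "i \<in> {1..n}" "j = \<pi> i"
      using bij_betw_imp_surj_on[OF bij] by (metis UNIV_I imageE)
    then show "y $ j = (\<Sum>k=1..n. ?c k *\<^sub>R top_block \<pi> k) $ j"
      using coord by simp
  qed
qed

lemma span_top_blocks:
  fixes \<pi> :: "nat \<Rightarrow> 'n::finite"
  assumes "bij_betw \<pi> {1..n} UNIV"
  shows "span (top_block \<pi> ` {1..n}) = UNIV"
proof -
  have "y \<in> span (top_block \<pi> ` {1..n})" for y
    by (subst top_block_expansion[OF assms, of y]) (intro span_sum span_scale span_base; simp)
  then show ?thesis
    by blast
qed

lemma independent_top_blocks: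
  fixes \<pi> :: "nat \<Rightarrow> 'n::finite"
  assumes "bij_betw \<pi> {1..n} UNIV"
  shows "independent (top_block \<pi> ` {1..n})"
proof (rule card_le_dim_spanning)
  show "card (top_block \<pi> ` {1..n}) \<le> dim (UNIV :: (real^'n) set)"
    using card_image_le[of "{1..n}" "top_block \<pi>"] card_eq_if_bij_betw_interval[OF assms] by simp
qed (use span_top_blocks[OF assms] in auto)

lemma inj_on_top_block:
  fixes \<pi> :: "nat \<Rightarrow> 'n::finite"
  assumes "bij_betw \<pi> {1..n} UNIV"
  shows "inj_on (top_block \<pi>) {1..n}"
proof (rule eq_card_imp_inj_on)
  have "card (top_block \<pi> ` {1..n}) = dim (span (top_block \<pi> ` {1..n}))"
    using independent_top_blocks[OF assms] by (rule dim_span_eq_card_independent[symmetric])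
  also have "\<dots> = card {1..n}"
    using span_top_blocks[OF assms] card_eq_if_bij_betw_interval[OF assms] by simp
  finally show "card (top_block \<pi> ` {1..n}) = card {1..n}" .
qed simp

lemma infdist_span_top_blocks_le:
  fixes \<pi> :: "nat \<Rightarrow> 'n::finite"
  assumes bij: "bij_betw \<pi> {1..n} UNIV" and "G \<subseteq> {1..<n}" and "0 \<le> b"
    and small: "\<And>k. k \<in> {1..<n} \<Longrightarrow> k \<notin> G \<Longrightarrow> \<bar>y$\<pi> k - y$\<pi> (Suc k)\<bar> \<le> b"
  shows "infdist y (span (top_block \<pi> ` insert n G)) \<le> real n * real n * b"
proof -
  let ?c = "top_block_coeff n \<pi> y" and ?K = "insert n G"
  have n: "n = CARD('n)"
    using bij by (rule card_eq_if_bij_betw_interval)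
  then have "?K \<subseteq> {1..n}"
    using \<open>G \<subseteq> {1..<n}\<close> by (auto simp: Suc_le_eq)
  define w where "w = (\<Sum>k\<in>?K. ?c k *\<^sub>R top_block \<pi> k)"
  have "w \<in> span (top_block \<pi> ` ?K)"
    unfolding w_def by (intro span_sum span_scale span_base) auto
  \<comment> \<open>Only the small gaps are missing from the approximation w.\<close>
  have "y - w = (\<Sum>k\<in>{1..n} - ?K. ?c k *\<^sub>R top_block \<pi> k)"
    using top_block_expansion[OF bij, of y] \<open>?K \<subseteq> {1..n}\<close>
    by (simp add: w_def sum_diff)
  also have "norm \<dots> \<le> (\<Sum>k\<in>{1..n} - ?K. b * real n)"
  proof (rule sum_norm_le)
    fix k
    assume k: "k \<in> {1..n} - ?K"
    then have "\<bar>?c k\<bar> \<le> b"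
      using small[of k] by (simp add: top_block_coeff_def)
    then show "norm (?c k *\<^sub>R top_block \<pi> k) \<le> b * real n"
      using norm_top_block_le[of \<pi> k] n \<open>0 \<le> b\<close> by (simp add: mult_mono)
  qed
  also have "\<dots> \<le> real n * (b * real n)"
    using card_mono[of "{1..n}" "{1..n} - ?K"] \<open>0 \<le> b\<close> by (simp add: mult_right_mono)
  also have "\<dots> = real n * real n * b"
    by simp
  finally have "dist y w \<le> real n * real n * b"
    by (simp add: dist_norm)
  with \<open>w \<in> span (top_block \<pi> ` ?K)\<close> show ?thesis
    using infdist_le order_trans by blast
qed

section \<open>Regions of the arrangement\<close>

locale arrangement_region =
  fixes A :: "real set" and \<Delta> :: "(real^'n) set" and x :: "real^'n" and \<pi> :: "nat \<Rightarrow> 'n"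
  assumes finite_A: "finite A" and nonempty_A: "A \<noteq> {}" and positive_A: "\<forall>a\<in>A. a > 0"
    and region: "\<Delta> \<in> arr_regions A" and x_in_region: "x \<in> \<Delta>"
    and bij: "bij_betw \<pi> {1..CARD('n)} UNIV"
    and decreasing: "\<forall>i\<in>{1..CARD('n)}. \<forall>j\<in>{1..CARD('n)}. i < j \<longrightarrow> x$(\<pi> i) > x$(\<pi> j)"
begin

definition big_gaps :: "nat set" where
  "big_gaps = {k \<in> {1..CARD('n) - 1}. x$(\<pi> k) - x$(\<pi> (k+1)) > Max A}"

lemma Max_A_in: "Max A \<in> A"
  using finite_A nonempty_A by simp

lemma le_Max_A: "a \<in> A \<Longrightarrow> a \<le> Max A"
  using finite_A by simp

lemma Max_A_pos: "0 < Max A"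
  using Max_A_in positive_A by blast

lemma big_gaps_subset: "big_gaps \<subseteq> {1..<CARD('n)}"
  unfolding big_gaps_def by auto

lemma region_avoids_hyperplanes:
  assumes "y \<in> \<Delta>" and "i \<noteq> j"
  shows "y$i \<noteq> y$j \<and> y$i - y$j \<notin> A"
proof -
  have "\<Delta> \<subseteq> arr_complement A"
    using region unfolding arr_regions_def by (rule in_components_subset)
  with assms show ?thesis
    by (auto simp: arr_complement_iff)
qed

lemma top_block_ray_in_region:
  assumes k: "k \<in> insert CARD('n) big_gaps" and "0 \<le> s"
  shows "x + s *\<^sub>R top_block \<pi> k \<in> \<Delta>"
proof (rule component_contains_ray[OF region[unfolded arr_regions_def] x_in_region _ \<open>0 \<le> s\<close>])
  fix t :: real
  assume "0 \<le> t"
  let ?y = "x + t *\<^sub>R top_block \<pi> k"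
  have inj: "inj_on \<pi> {1..CARD('n)}"
    using bij by (rule bij_betw_imp_inj_on)
  have "k \<le> CARD('n)"
    using k big_gaps_subset by auto
  show "?y \<in> arr_complement A"
  proof (rule mem_arr_complement_if_decreasing[OF bij positive_A])
    fix i j
    assume ij: "i \<in> {1..CARD('n)}" "j \<in> {1..CARD('n)}" "i < j"
    have "\<pi> i \<noteq> \<pi> j"
      using inj ij by (metis inj_on_eq_iff less_irrefl)
    have x_ij: "x$\<pi> j < x$\<pi> i"
      using decreasing ij by blast
    show "?y$\<pi> j < ?y$\<pi> i \<and> ?y$\<pi> i - ?y$\<pi> j \<notin> A"
    proof (cases "i \<le> k \<and> k < j")
      case True
      \<comment> \<open>The ray separates positions i and j across the big gap after k, so their difference
        stays above every element of A.\<close>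
      then have "k \<in> big_gaps" "Suc k \<le> j"
        using k ij by auto
      then have "Max A < x$\<pi> k - x$\<pi> (Suc k)"
        unfolding big_gaps_def by simp
      moreover have "x$\<pi> k \<le> x$\<pi> i" "x$\<pi> j \<le> x$\<pi> (Suc k)"
        using decreasing_imp_le[OF decreasing] ij True \<open>Suc k \<le> j\<close> by simp_all
      ultimately have "Max A < ?y$\<pi> i - ?y$\<pi> j"
        using True ij \<open>0 \<le> t\<close> \<open>k \<le> CARD('n)\<close> by (simp add: top_block_nth[OF inj])
      then show ?thesis
        using Max_A_pos by (auto dest: le_Max_A)
    next
      case False
      then have "?y$\<pi> i - ?y$\<pi> j = x$\<pi> i - x$\<pi> j"
        using ij \<open>k \<le> CARD('n)\<close> by (auto simp: top_block_nth[OF inj])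
      with x_ij region_avoids_hyperplanes[OF x_in_region \<open>\<pi> i \<noteq> \<pi> j\<close>] show ?thesis
        by (metis diff_gt_0_iff_gt)
    qed
  qed
qed

lemma small_gap_in_region:
  assumes "y \<in> \<Delta>" and k: "k \<in> {1..<CARD('n)}" and "k \<notin> big_gaps"
  shows "\<bar>y$\<pi> k - y$\<pi> (Suc k)\<bar> \<le> Max A"
proof -
  have "connected \<Delta>"
    using region unfolding arr_regions_def by (rule in_components_connected)
  have "\<pi> k \<noteq> \<pi> (Suc k)"
    using inj_onD[OF bij_betw_imp_inj_on[OF bij], of k "Suc k"] k by auto
  have avoid: "z$\<pi> k - z$\<pi> (Suc k) \<noteq> c" if "z \<in> \<Delta>" "c = 0 \<or> c = Max A" for z c
    using region_avoids_hyperplanes[OF that(1) \<open>\<pi> k \<noteq> \<pi> (Suc k)\<close>] that(2) Max_A_in by auto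
  \<comment> \<open>Both signs are constant on the connected region \<Delta>, so it suffices to read them off at x.\<close>
  have "\<not> x$\<pi> k - x$\<pi> (Suc k) < 0"
    using bspec[OF bspec[OF decreasing, of k], of "Suc k"] k by simp
  moreover have "x$\<pi> k - x$\<pi> (Suc k) < Max A"
    using \<open>k \<notin> big_gaps\<close> k avoid[OF x_in_region, of "Max A"] unfolding big_gaps_def by auto
  moreover have "x$\<pi> k - x$\<pi> (Suc k) < c \<longleftrightarrow> y$\<pi> k - y$\<pi> (Suc k) < c" if "c = 0 \<or> c = Max A" for c
    by (rule connected_diff_less_iff[OF \<open>connected \<Delta>\<close> x_in_region \<open>y \<in> \<Delta>\<close>]) (use avoid that in blast)
  ultimately have "\<not> y$\<pi> k - y$\<pi> (Suc k) < 0" "y$\<pi> k - y$\<pi> (Suc k) < Max A"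
    by blast+
  then show ?thesis
    by linarith
qed

lemma level_region: "level \<Delta> = Suc (card big_gaps)"
proof -
  let ?K = "insert CARD('n) big_gaps"
  have K: "?K \<subseteq> {1..CARD('n)}"
    using big_gaps_subset by auto
  have "level \<Delta> = card (top_block \<pi> ` ?K)"
  proof (rule level_eq_card_independent)
    show "independent (top_block \<pi> ` ?K)"
      using independent_top_blocks[OF bij] image_mono[OF K] by (rule independent_mono)
    show "x + s *\<^sub>R v \<in> \<Delta>" if "v \<in> top_block \<pi> ` ?K" "0 \<le> s" for v s
      using that top_block_ray_in_region by blast
    show "infdist y (span (top_block \<pi> ` ?K)) \<le> real CARD('n) * real CARD('n) * Max A"
      if "y \<in> \<Delta>" for y
      by (rule infdist_span_top_blocks_le[OF bij big_gaps_subset])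
        (use Max_A_pos small_gap_in_region[OF that] in auto)
  qed
  also have "\<dots> = card ?K"
    using inj_on_subset[OF inj_on_top_block[OF bij] K] by (rule card_image)
  also have "\<dots> = Suc (card big_gaps)"
  proof (rule card_insert_disjoint)
    show "finite big_gaps" "CARD('n) \<notin> big_gaps"
      using big_gaps_subset finite_subset[OF big_gaps_subset] by auto
  qed
  finally show ?thesis .
qed

lemma prime_components_region:
  "prime_components CARD('n) (D1_path CARD('n) (alpha_seq (Max A) CARD('n) \<pi> x)) =
    Suc (card big_gaps)"
  using prime_components_D1_path_alpha_seq[OF decreasing less_imp_le[OF Max_A_pos]]
  unfolding big_gaps_def by (simp add: Suc_leI)

end

theorem theorem3p2:
  fixes A :: "real set" and \<Delta> :: "(real^'n) set"
    and x :: "real^'n" and \<pi> :: "nat \<Rightarrow> 'n"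
  assumes "finite A" and "A \<noteq> {}" and "\<forall>a\<in>A. a > 0"
    and "\<Delta> \<in> arr_regions A"
    and "x \<in> \<Delta>"
    and "bij_betw \<pi> {1..CARD('n)} UNIV"
    and "\<forall>i\<in>{1..CARD('n)}. \<forall>j\<in>{1..CARD('n)}. i < j \<longrightarrow> x$(\<pi> i) > x$(\<pi> j)"
  shows "level \<Delta> = prime_components CARD('n)
                      (D1_path CARD('n) (alpha_seq (Max A) CARD('n) \<pi> x))
         \<and> level \<Delta> = 1 + card {k \<in> {1..CARD('n) - 1}. x$(\<pi> k) - x$(\<pi> (k+1)) > Max A}"
proof -
  interpret arrangement_region A \<Delta> x \<pi>
    using assms by unfold_locales
  show ?thesis
    using level_region prime_components_region unfolding big_gaps_def by simp
qed

end
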